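(* A commutative ring $R$ is locally stable if and only if the formal power series ring $R[[X]]$ is locally stable.
   Context: All rings are commutative with identity. A ring $S$ has stable range 1 if whenever $aS+bS=S$ there is $y\in S$ with $a+by$ a unit. $S$ is locally stable if whenever $a,b\in S$ with $aS+bS=S$ there is $y\in S$ such that $S/(a+by)S$ has stable range 1. *)

theory Defs
  imports "HOL-Computational_Algebra.Formal_Power_Series"
begin

definition stable_range_1 :: "'a::comm_ring_1 itself \<Rightarrow> bool" where
  "stable_range_1 _ \<longleftrightarrow>
     (\<forall>a b :: 'a. (\<exists>u v. a * u + b * v = 1) \<longrightarrow> (\<exists>y. (a + b * y) dvd 1))"

text \<open>Stable range 1 of the quotient ring S/I, where I is an ideal of S (the type 'a).
  Elements of S/I are represented by elements of S; equality in S/I is congruence mod I.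
  So aS/I + bS/I = S/I iff au + bv - 1 \<in> I for some u, v, and a + by is a unit of S/I iff
  (a + by) z - 1 \<in> I for some z.\<close>
definition quotient_stable_range_1 :: "'a::comm_ring_1 set \<Rightarrow> bool" where
  "quotient_stable_range_1 I \<longleftrightarrow>
     (\<forall>a b :: 'a. (\<exists>u v. a * u + b * v - 1 \<in> I) \<longrightarrow> (\<exists>y z. (a + b * y) * z - 1 \<in> I))"

definition principal_ideal :: "'a::comm_ring_1 \<Rightarrow> 'a set" where
  "principal_ideal c = {c * s | s. True}"

definition locally_stable :: "'a::comm_ring_1 itself \<Rightarrow> bool" where
  "locally_stable _ \<longleftrightarrow>
     (\<forall>a b :: 'a. (\<exists>u v. a * u + b * v = 1) \<longrightarrow>
        (\<exists>y. quotient_stable_range_1 (principal_ideal (a + b * y))))"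

end

theory Submission
  imports Defs
begin

unbundle fps_syntax

text \<open>An element of R[[X]] is a unit modulo hR[[X]] exactly when its constant term is a unit
  modulo h(0)R: a lift of the constant-term congruence differs from a unit of R[[X]] by a multiple
  of h. Hence R[[X]]/hR[[X]] has stable range 1 iff R/h(0)R does, and both directions of the
  theorem follow by passing between a pair (f, g) and its constant terms.\<close>

definition unit_modulo :: "'a::comm_ring_1 set \<Rightarrow> 'a \<Rightarrow> bool" where
  "unit_modulo I x \<longleftrightarrow> (\<exists>z. x * z - 1 \<in> I)"

lemma mem_principal_ideal_iff: "x \<in> principal_ideal c \<longleftrightarrow> c dvd x"
  unfolding principal_ideal_def dvd_def by auto

lemma comaximal_modulo_iff_unit_modulo:
  fixes a b :: "'a::comm_ring_1"
  assumes "\<And>x y. x \<in> I \<Longrightarrow> x * y \<in> I"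
  shows "(\<exists>u v. a * u + b * v - 1 \<in> I) \<longleftrightarrow> (\<exists>u v. unit_modulo I (a * u + b * v))"
proof
  assume "\<exists>u v. a * u + b * v - 1 \<in> I"
  then show "\<exists>u v. unit_modulo I (a * u + b * v)"
    unfolding unit_modulo_def by (metis mult.right_neutral)
next
  assume "\<exists>u v. unit_modulo I (a * u + b * v)"
  then obtain u v z where "(a * u + b * v) * z - 1 \<in> I"
    unfolding unit_modulo_def by blast
  then have "a * (u * z) + b * (v * z) - 1 \<in> I"
    by (simp add: algebra_simps)
  then show "\<exists>u v. a * u + b * v - 1 \<in> I" by blast
qed

lemma quotient_stable_range_1_principal_iff:
  "quotient_stable_range_1 (principal_ideal c) \<longleftrightarrow>
     (\<forall>a b. (\<exists>u v. unit_modulo (principal_ideal c) (a * u + b * v)) \<longrightarrow>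
        (\<exists>y. unit_modulo (principal_ideal c) (a + b * y)))"
proof -
  have "x * y \<in> principal_ideal c" if "x \<in> principal_ideal c" for x y
    using that by (simp add: mem_principal_ideal_iff)
  then show ?thesis
    unfolding quotient_stable_range_1_def
    by (simp add: comaximal_modulo_iff_unit_modulo unit_modulo_def)
qed

lemma fps_unit_modulo_principal_iff:
  fixes F h :: "'a::comm_ring_1 fps"
  shows "unit_modulo (principal_ideal h) F \<longleftrightarrow> unit_modulo (principal_ideal (h $ 0)) (F $ 0)"
proof
  assume "unit_modulo (principal_ideal h) F"
  then obtain z t where "F * z - 1 = h * t"
    by (auto simp: unit_modulo_def mem_principal_ideal_iff dvd_def)
  then have "F $ 0 * z $ 0 - 1 = h $ 0 * t $ 0"
    by (metis fps_mult_nth_0 fps_sub_nth fps_one_nth)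
  then show "unit_modulo (principal_ideal (h $ 0)) (F $ 0)"
    unfolding unit_modulo_def mem_principal_ideal_iff by (metis dvd_triv_left)
next
  assume "unit_modulo (principal_ideal (h $ 0)) (F $ 0)"
  then obtain z t where zt: "F $ 0 * z - 1 = h $ 0 * t"
    by (auto simp: unit_modulo_def mem_principal_ideal_iff dvd_def)
  define e where "e = F * fps_const z - h * fps_const t"
  have "e $ 0 = 1"
    using zt by (simp add: e_def algebra_simps)
  then obtain w where w: "e * w = 1"
    using fps_right_inverse[of e 1] by auto
  have "F * (fps_const z * w) - 1 = h * (fps_const t * w)"
    using w by (simp add: e_def algebra_simps)
  then show "unit_modulo (principal_ideal h) F"
    unfolding unit_modulo_def mem_principal_ideal_iff by (metis dvd_triv_left)
qed

lemma quotient_stable_range_1_fps_principal_iff: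
  fixes h :: "'a::comm_ring_1 fps"
  shows "quotient_stable_range_1 (principal_ideal h) \<longleftrightarrow>
         quotient_stable_range_1 (principal_ideal (h $ 0))"
proof
  assume SR: "quotient_stable_range_1 (principal_ideal h)"
  show "quotient_stable_range_1 (principal_ideal (h $ 0))"
    unfolding quotient_stable_range_1_principal_iff
  proof (intro allI impI)
    fix p q :: 'a
    assume "\<exists>u v. unit_modulo (principal_ideal (h $ 0)) (p * u + q * v)"
    then obtain u v where "unit_modulo (principal_ideal (h $ 0)) (p * u + q * v)" by blast
    then have "unit_modulo (principal_ideal h) (fps_const p * fps_const u + fps_const q * fps_const v)"
      by (simp add: fps_unit_modulo_principal_iff)
    then obtain Y where "unit_modulo (principal_ideal h) (fps_const p + fps_const q * Y)"
      using SR unfolding quotient_stable_range_1_principal_iff by blast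
    then show "\<exists>y. unit_modulo (principal_ideal (h $ 0)) (p + q * y)"
      by (auto simp: fps_unit_modulo_principal_iff)
  qed
next
  assume SR: "quotient_stable_range_1 (principal_ideal (h $ 0))"
  show "quotient_stable_range_1 (principal_ideal h)"
    unfolding quotient_stable_range_1_principal_iff
  proof (intro allI impI)
    fix a b :: "'a fps"
    assume "\<exists>U V. unit_modulo (principal_ideal h) (a * U + b * V)"
    then obtain U V where "unit_modulo (principal_ideal h) (a * U + b * V)" by blast
    then have "unit_modulo (principal_ideal (h $ 0)) (a $ 0 * U $ 0 + b $ 0 * V $ 0)"
      by (simp add: fps_unit_modulo_principal_iff)
    then obtain y where "unit_modulo (principal_ideal (h $ 0)) (a $ 0 + b $ 0 * y)"
      using SR unfolding quotient_stable_range_1_principal_iff by blast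
    then have "unit_modulo (principal_ideal h) (a + b * fps_const y)"
      by (simp add: fps_unit_modulo_principal_iff)
    then show "\<exists>Y. unit_modulo (principal_ideal h) (a + b * Y)" by blast
  qed
qed

lemma locally_stable_fps:
  assumes "locally_stable TYPE('a::comm_ring_1)"
  shows "locally_stable TYPE('a fps)"
  unfolding locally_stable_def
proof (intro allI impI)
  fix f g :: "'a fps"
  assume "\<exists>u v. f * u + g * v = 1"
  then obtain u v where "f * u + g * v = 1" by blast
  then have "f $ 0 * u $ 0 + g $ 0 * v $ 0 = 1"
    by (metis fps_add_nth fps_mult_nth_0 fps_one_nth)
  then obtain y where "quotient_stable_range_1 (principal_ideal (f $ 0 + g $ 0 * y))"
    using assms unfolding locally_stable_def by blast
  then have "quotient_stable_range_1 (principal_ideal (f + g * fps_const y))"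
    by (simp add: quotient_stable_range_1_fps_principal_iff)
  then show "\<exists>Y. quotient_stable_range_1 (principal_ideal (f + g * Y))" by blast
qed

lemma locally_stable_of_fps:
  assumes "locally_stable TYPE('a::comm_ring_1 fps)"
  shows "locally_stable TYPE('a)"
  unfolding locally_stable_def
proof (intro allI impI)
  fix a b :: 'a
  assume "\<exists>u v. a * u + b * v = 1"
  then obtain u v where "a * u + b * v = 1" by blast
  then have "fps_const a * fps_const u + fps_const b * fps_const v = 1"
    by (metis fps_const_add fps_const_mult fps_const_1_eq_1)
  then obtain Y where "quotient_stable_range_1 (principal_ideal (fps_const a + fps_const b * Y))"
    using assms unfolding locally_stable_def by blast
  then have "quotient_stable_range_1 (principal_ideal (a + b * Y $ 0))"
    by (simp add: quotient_stable_range_1_fps_principal_iff)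
  then show "\<exists>y. quotient_stable_range_1 (principal_ideal (a + b * y))" by blast
qed

theorem corollary2p6:
  shows "locally_stable TYPE('a::comm_ring_1) \<longleftrightarrow> locally_stable TYPE('a fps)"
  using locally_stable_fps locally_stable_of_fps by blast

end
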